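(* Let $E$ be the face monoid of a simple polytope $P$, with set of facets $A$. Then $E$ has a monoid presentation with generators $a\in A$ and relations: $a^2=a$ for $a\in A$; $ab=ba$ for $a,b\in A$; and $a_1\cdots a_k=a_1\cdots a_kb$ for all $b\in A$ and all independent facets $a_1,\dots,a_k$ with $2\le k\le\dim P$ and $a_1\cap\cdots\cap a_k=\varnothing$.
   Context: The face monoid of a convex polytope $P$ is the set of its faces (including $P$ and $\varnothing$) with multiplication $f_1f_2=f_1\cap f_2$ (identity $P$); in the associated order (reverse inclusion) the atoms are the facets and the join is intersection. $P$ is simple if each vertex lies in exactly $\dim P$ facets. A set $S$ of facets is independent if $\bigcap(S\setminus\{s\})\supsetneq\bigcap S$ for every $s\in S$. *)

theory Defs
  imports "HOL-Analysis.Analysis"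
begin

text \<open>The face monoid of a polytope P: its faces (including P and the empty set),
  with product = intersection and identity P.\<close>
definition face_monoid :: "'a::euclidean_space set \<Rightarrow> 'a set set" where
  "face_monoid P = {F. F face_of P}"

definition facets :: "'a::euclidean_space set \<Rightarrow> 'a set set" where
  "facets P = {F. F facet_of P}"

definition simple_polytope :: "'a::euclidean_space set \<Rightarrow> bool" where
  "simple_polytope P \<longleftrightarrow> polytope P \<and>
     (\<forall>v. v extreme_point_of P \<longrightarrow> int (card {F. F facet_of P \<and> v \<in> F}) = aff_dim P)"

definition face_prod :: "'a::euclidean_space set \<Rightarrow> 'a set list \<Rightarrow> 'a set" where
  "face_prod P w = P \<inter> \<Inter>(set w)"

definition independent_facets :: "'a::euclidean_space set \<Rightarrow> 'a set set \<Rightarrow> bool" where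
  "independent_facets P S \<longleftrightarrow> S \<subseteq> facets P \<and>
     (\<forall>s\<in>S. P \<inter> \<Inter>(S - {s}) \<supset> P \<inter> \<Inter>S)"

inductive mon_cong :: "('g list \<times> 'g list) set \<Rightarrow> 'g list \<Rightarrow> 'g list \<Rightarrow> bool"
  for R where
  base: "(u, v) \<in> R \<Longrightarrow> mon_cong R u v"
| refl: "mon_cong R u u"
| sym: "mon_cong R u v \<Longrightarrow> mon_cong R v u"
| trans: "mon_cong R u v \<Longrightarrow> mon_cong R v w \<Longrightarrow> mon_cong R u w"
| compat: "mon_cong R u v \<Longrightarrow> mon_cong R (x @ u @ y) (x @ v @ y)"

definition has_presentation ::
  "'e set \<Rightarrow> ('e \<Rightarrow> 'e \<Rightarrow> 'e) \<Rightarrow> 'e \<Rightarrow> 'g set \<Rightarrow> ('g \<Rightarrow> 'e) \<Rightarrow> ('g list \<times> 'g list) set \<Rightarrow> bool"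
  where
  "has_presentation E mul e1 A g R \<longleftrightarrow>
     (let ev = (\<lambda>w. foldr (\<lambda>a x. mul (g a) x) w e1) in
       ev ` lists A = E \<and>
       (\<forall>u\<in>lists A. \<forall>v\<in>lists A. ev u = ev v \<longleftrightarrow> mon_cong R u v))"

definition facet_relations :: "'a::euclidean_space set \<Rightarrow> ('a set list \<times> 'a set list) set" where
  "facet_relations P =
     {([a, a], [a]) | a. a \<in> facets P}
   \<union> {([a, b], [b, a]) | a b. a \<in> facets P \<and> b \<in> facets P}
   \<union> {(as, as @ [b]) | as b. b \<in> facets P \<and> distinct as \<and> set as \<subseteq> facets P \<and>
        independent_facets P (set as) \<and> 2 \<le> length as \<and> int (length as) \<le> aff_dim P \<and>
        \<Inter>(set as) = {}}"

end

theory Submission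
  imports Defs
begin

text \<open>The evaluation of words in facets is onto the face monoid because every nonempty proper
  face of a polytope is the intersection of the facets containing it, and the intersection of
  all facets is empty. For the kernel it suffices to show that a word \<open>u\<close> is congruent to
  \<open>u b\<close> whenever the face \<open>\<Inter>u\<close> lies in the facet \<open>b\<close>. If that face is nonempty, then \<open>b\<close>
  already occurs in \<open>u\<close>: at a vertex of a simple polytope the active facet normals form a
  basis, so one can move off the face along an edge leaving every facet except a prescribed one.
  If the face is empty, \<open>u\<close> contains an independent set \<open>S\<close> of facets with empty intersection,
  and \<open>|S| \<le> dim P + 1\<close>. For \<open>|S| \<le> dim P\<close> the defining relation for \<open>S\<close> absorbs \<open>b\<close>; for
  \<open>|S| = dim P + 1\<close> the normals of \<open>S\<close> satisfy a linear dependency with coefficients of one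
  sign, which exhibits \<open>P\<close> as the simplex spanned by the vertices opposite to the facets of \<open>S\<close>,
  so that \<open>S\<close> contains every facet.\<close>

section \<open>Words modulo idempotent commuting generators\<close>

declare mon_cong.trans [trans]

locale idempotent_commutative_relations =
  fixes R :: "('g list \<times> 'g list) set" and A :: "'g set"
  assumes idempotent: "a \<in> A \<Longrightarrow> mon_cong R [a, a] [a]"
    and commute: "a \<in> A \<Longrightarrow> b \<in> A \<Longrightarrow> mon_cong R [a, b] [b, a]"
begin

lemma mon_cong_append_left: "mon_cong R u v \<Longrightarrow> mon_cong R (x @ u) (x @ v)"
  using mon_cong.compat[of R u v x "[]"] by simp

lemma mon_cong_append_right: "mon_cong R u v \<Longrightarrow> mon_cong R (u @ y) (v @ y)"
  using mon_cong.compat[of R u v "[]" y] by simp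

lemma mon_cong_Cons_snoc: "a \<in> A \<Longrightarrow> set v \<subseteq> A \<Longrightarrow> mon_cong R (a # v) (v @ [a])"
proof (induction v)
  case Nil
  then show ?case by (simp add: mon_cong.refl)
next
  case (Cons b v)
  have "mon_cong R (a # b # v) (b # a # v)"
    using mon_cong_append_right[OF commute[of a b], of v] Cons.prems by simp
  also have "mon_cong R \<dots> (b # v @ [a])"
    using mon_cong_append_left[OF Cons.IH, of "[b]"] Cons.prems by simp
  finally show ?case
    by simp
qed

lemma mon_cong_append_commute: "set u \<subseteq> A \<Longrightarrow> set v \<subseteq> A \<Longrightarrow> mon_cong R (u @ v) (v @ u)"
proof (induction u)
  case Nil
  then show ?case by (simp add: mon_cong.refl)
next
  case (Cons a u)
  have "mon_cong R (a # u @ v) (a # v @ u)"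
    using mon_cong_append_left[OF Cons.IH, of "[a]"] Cons.prems by simp
  also have "mon_cong R \<dots> (v @ a # u)"
    using mon_cong_append_right[OF mon_cong_Cons_snoc, of a v u] Cons.prems by simp
  finally show ?case
    by simp
qed

lemma mon_cong_snoc_absorb: "set u \<subseteq> A \<Longrightarrow> a \<in> set u \<Longrightarrow> mon_cong R u (u @ [a])"
proof (induction u)
  case Nil
  then show ?case by simp
next
  case (Cons x u)
  show ?case
  proof (cases "a = x")
    case True
    have "mon_cong R (x # u) (x # x # u)"
      using mon_cong.sym[OF mon_cong_append_right[OF idempotent, of x u]] Cons.prems by simp
    also have "mon_cong R \<dots> (x # u @ [x])"
      using mon_cong_append_left[OF mon_cong_Cons_snoc[of x u], of "[x]"] Cons.prems by simp
    finally show ?thesis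
      using True by simp
  next
    case False
    then show ?thesis
      using mon_cong_append_left[OF Cons.IH, of "[x]"] Cons.prems by simp
  qed
qed

lemma mon_cong_append_absorb: "set u \<subseteq> A \<Longrightarrow> set v \<subseteq> set u \<Longrightarrow> mon_cong R u (u @ v)"
proof (induction v rule: rev_induct)
  case Nil
  then show ?case by (simp add: mon_cong.refl)
next
  case (snoc a v)
  then have "mon_cong R u (u @ v)"
    by simp
  also have "mon_cong R \<dots> ((u @ v) @ [a])"
    using snoc.prems by (intro mon_cong_snoc_absorb) auto
  finally show ?case
    by simp
qed

lemma mon_cong_if_set_eq:
  assumes "set u \<subseteq> A" and "set u = set v"
  shows "mon_cong R u v"
proof -
  have "mon_cong R u (u @ v)"
    using assms by (intro mon_cong_append_absorb) auto
  also have "mon_cong R \<dots> (v @ u)"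
    using assms by (intro mon_cong_append_commute) auto
  also have "mon_cong R \<dots> v"
    using assms by (intro mon_cong.sym[OF mon_cong_append_absorb]) auto
  finally show ?thesis .
qed

end

lemma idempotent_commutative_facet_relations:
  "idempotent_commutative_relations (facet_relations P) (facets P)"
  by unfold_locales (auto simp: facet_relations_def intro: mon_cong.base)

section \<open>Facet inequalities of a polytope\<close>

lemma minimal_halfspaces_boundary_point:
  fixes S :: "'a::euclidean_space set"
  assumes "finite F"
    and seq: "S = affine hull S \<inter> \<Inter>F"
    and faceq: "\<And>h. h \<in> F \<Longrightarrow> a h \<noteq> 0 \<and> h = {x. a h \<bullet> x \<le> b h}"
    and psub: "\<And>F'. F' \<subset> F \<Longrightarrow> S \<subset> affine hull S \<inter> \<Inter>F'"
    and "S \<noteq> {}" and h: "h \<in> F"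
  obtains w where "w \<in> S" "a h \<bullet> w = b h" "\<And>i. i \<in> F \<Longrightarrow> i \<noteq> h \<Longrightarrow> a i \<bullet> w < b i"
proof -
  have "convex S"
    using seq faceq \<open>finite F\<close> by (metis polyhedron_Int_affine polyhedron_imp_convex)
  then obtain p where "p \<in> rel_interior S"
    using \<open>S \<noteq> {}\<close> rel_interior_eq_empty by blast
  then have p: "p \<in> S" "\<And>i. i \<in> F \<Longrightarrow> a i \<bullet> p < b i"
    using rel_interior_polyhedron_explicit[OF assms(1-4)] by auto
  obtain q where q: "q \<in> affine hull S" "q \<in> \<Inter>(F - {h})" "q \<notin> S"
    using psub[of "F - {h}"] h by blast
  then have "q \<notin> h"
    using seq by blast
  then have "b h < a h \<bullet> q"
    using faceq[OF h] by auto
  define t where "t = (b h - a h \<bullet> p) / (a h \<bullet> q - a h \<bullet> p)"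
  define w where "w = (1 - t) *\<^sub>R p + t *\<^sub>R q"
  have t: "0 < t" "t < 1"
    using p(2)[OF h] \<open>b h < a h \<bullet> q\<close> by (auto simp: t_def field_split_simps)
  have inner_w: "a i \<bullet> w = (1 - t) * (a i \<bullet> p) + t * (a i \<bullet> q)" for i
    by (simp add: w_def inner_add_right)
  have "t * (a h \<bullet> q - a h \<bullet> p) = b h - a h \<bullet> p"
    using p(2)[OF h] \<open>b h < a h \<bullet> q\<close> by (simp add: t_def)
  then have on_h: "a h \<bullet> w = b h"
    unfolding inner_w by argo
  have below: "a i \<bullet> w < b i" if "i \<in> F" "i \<noteq> h" for i
  proof -
    have "a i \<bullet> q \<le> b i"
      using q(2) that faceq by blast
    then have "t * (a i \<bullet> q) \<le> t * b i"
      using t by simp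
    moreover have "(1 - t) * (a i \<bullet> p) < (1 - t) * b i"
      using p(2)[OF that(1)] t by simp
    ultimately show ?thesis
      unfolding inner_w by argo
  qed
  have "w \<in> affine hull S"
    using p(1) q(1) by (simp add: w_def mem_affine hull_inc)
  moreover have "w \<in> \<Inter>F"
    using on_h below faceq by (force simp: less_imp_le)
  ultimately have "w \<in> S"
    using seq by blast
  with on_h below that show thesis
    by blast
qed

lemma minimal_halfspaces_bij_facets:
  fixes S :: "'a::euclidean_space set"
  assumes "finite F"
    and "S = affine hull S \<inter> \<Inter>F"
    and "\<And>h. h \<in> F \<Longrightarrow> a h \<noteq> 0 \<and> h = {x. a h \<bullet> x \<le> b h}"
    and psub: "\<And>F'. F' \<subset> F \<Longrightarrow> S \<subset> affine hull S \<inter> \<Inter>F'"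
  shows "bij_betw (\<lambda>h. S \<inter> {x. a h \<bullet> x = b h}) F {C. C facet_of S}"
proof (rule bij_betw_imageI)
  show "inj_on (\<lambda>h. S \<inter> {x. a h \<bullet> x = b h}) F"
  proof (rule inj_onI, rule ccontr)
    fix h1 h2
    assume h: "h1 \<in> F" "h2 \<in> F" and eq: "S \<inter> {x. a h1 \<bullet> x = b h1} = S \<inter> {x. a h2 \<bullet> x = b h2}"
      and "h1 \<noteq> h2"
    have "S \<noteq> {}"
      using psub[of "{}"] \<open>h1 \<in> F\<close> by fastforce
    then obtain w where "w \<in> S" "a h1 \<bullet> w = b h1" "a h2 \<bullet> w < b h2"
      using minimal_halfspaces_boundary_point[OF assms \<open>S \<noteq> {}\<close> h(1)] h(2) \<open>h1 \<noteq> h2\<close>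
      by metis
    with eq have "a h2 \<bullet> w = b h2"
      by blast
    with \<open>a h2 \<bullet> w < b h2\<close> show False
      by simp
  qed
  show "(\<lambda>h. S \<inter> {x. a h \<bullet> x = b h}) ` F = {C. C facet_of S}"
    using facet_of_polyhedron_explicit[OF assms] by auto
qed

lemma polytope_facet_inequalities:
  fixes P :: "'a::euclidean_space set"
  assumes "polytope P"
  obtains \<alpha> \<beta> where
    "\<And>C x. C facet_of P \<Longrightarrow> x \<in> affine hull P \<Longrightarrow> x + \<alpha> C \<in> affine hull P"
    "\<And>x. x \<in> P \<longleftrightarrow> x \<in> affine hull P \<and> (\<forall>C. C facet_of P \<longrightarrow> \<alpha> C \<bullet> x \<le> \<beta> C)"
    "\<And>C. C facet_of P \<Longrightarrow> C = P \<inter> {x. \<alpha> C \<bullet> x = \<beta> C}"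
proof -
  obtain F where F: "finite F" "P = affine hull P \<inter> \<Inter>F"
    and "\<forall>h\<in>F. \<exists>a b. a \<noteq> 0 \<and> h = {x. a \<bullet> x \<le> b} \<and>
                            (\<forall>x\<in>affine hull P. x + a \<in> affine hull P)"
    and psub: "\<And>F'. F' \<subset> F \<Longrightarrow> P \<subset> affine hull P \<inter> \<Inter>F'"
    using \<open>polytope P\<close> polytope_imp_polyhedron polyhedron_Int_affine_parallel_minimal by metis
  then obtain a b where ab: "\<And>h. h \<in> F \<Longrightarrow> a h \<noteq> 0 \<and> h = {x. a h \<bullet> x \<le> b h}"
    and a_parallel: "\<And>h x. h \<in> F \<Longrightarrow> x \<in> affine hull P \<Longrightarrow> x + a h \<in> affine hull P"
    by metis
  define facet where "facet h = P \<inter> {x. a h \<bullet> x = b h}" for h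
  have bij: "bij_betw facet F {C. C facet_of P}"
    unfolding facet_def by (rule minimal_halfspaces_bij_facets[OF F ab psub])
  define h where "h = the_inv_into F facet"
  have h: "h C \<in> F" "facet (h C) = C" if "C facet_of P" for C
    using bij that by (auto simp: h_def bij_betw_def the_inv_into_into f_the_inv_into_f)
  have h_facet: "h (facet g) = g" if "g \<in> F" for g
    using bij that by (simp add: h_def bij_betw_def the_inv_into_f_f)
  show thesis
  proof (rule that[of "a \<circ> h" "b \<circ> h"])
    show "x + (a \<circ> h) C \<in> affine hull P" if "C facet_of P" "x \<in> affine hull P" for C x
      using a_parallel[OF h(1)] that by simp
    show "C = P \<inter> {x. (a \<circ> h) C \<bullet> x = (b \<circ> h) C}" if "C facet_of P" for C
      using h[OF that] by (simp add: facet_def)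
    show "x \<in> P \<longleftrightarrow> x \<in> affine hull P \<and> (\<forall>C. C facet_of P \<longrightarrow> (a \<circ> h) C \<bullet> x \<le> (b \<circ> h) C)"
      for x
    proof -
      have "(\<forall>C. C facet_of P \<longrightarrow> (a \<circ> h) C \<bullet> x \<le> (b \<circ> h) C) \<longleftrightarrow> (\<forall>g\<in>F. a g \<bullet> x \<le> b g)"
      proof
        assume all: "\<forall>C. C facet_of P \<longrightarrow> (a \<circ> h) C \<bullet> x \<le> (b \<circ> h) C"
        have "facet g facet_of P" if "g \<in> F" for g
          using bij that by (auto simp: bij_betw_def)
        with all h_facet show "\<forall>g\<in>F. a g \<bullet> x \<le> b g"
          by fastforce
      next
        assume "\<forall>g\<in>F. a g \<bullet> x \<le> b g"
        with h(1) show "\<forall>C. C facet_of P \<longrightarrow> (a \<circ> h) C \<bullet> x \<le> (b \<circ> h) C"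
          by simp
      qed
      also have "\<dots> \<longleftrightarrow> x \<in> \<Inter>F"
        using ab by blast
      finally show ?thesis
        using arg_cong[OF F(2), of "(\<in>) x"] by simp
    qed
  qed
qed

lemma affine_hull_translates_subspace:
  fixes S :: "'a::euclidean_space set"
  assumes "p \<in> S"
  obtains L where "subspace L" "\<And>x y. x \<in> affine hull S \<Longrightarrow> x + y \<in> affine hull S \<longleftrightarrow> y \<in> L"
    "aff_dim S = int (dim L)"
proof
  define L where "L = span ((+) (- p) ` S)"
  show "subspace L"
    by (simp add: L_def)
  have "affine hull S = (+) p ` L"
    using affine_hull_span_gen[OF hull_inc[OF \<open>p \<in> S\<close>]] by (simp add: L_def)
  then have mem_aff: "x \<in> affine hull S \<longleftrightarrow> - p + x \<in> L" for x
    by (force simp: image_iff)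
  show "x + y \<in> affine hull S \<longleftrightarrow> y \<in> L" if "x \<in> affine hull S" for x y
  proof -
    have x: "- p + x \<in> L"
      using that mem_aff by blast
    have "- p + (x + y) = (- p + x) + y" "y = (- p + (x + y)) - (- p + x)"
      by (simp_all add: algebra_simps)
    then show ?thesis
      using subspace_add[of L _ y] subspace_diff[of L _ "- p + x"] x mem_aff[of "x + y"]
      by (metis L_def subspace_span)
  qed
  show "aff_dim S = int (dim L)"
    using aff_dim_eq_dim[OF hull_inc[OF \<open>p \<in> S\<close>]] by (simp add: L_def)
qed

locale polytope_frame =
  fixes P :: "'a::euclidean_space set" and L :: "'a set"
    and \<alpha> :: "'a set \<Rightarrow> 'a" and \<beta> :: "'a set \<Rightarrow> real"
  assumes polytope: "polytope P"
    and subspace: "subspace L"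
    and affine_hull_add_iff: "x \<in> affine hull P \<Longrightarrow> x + y \<in> affine hull P \<longleftrightarrow> y \<in> L"
    and normal_in_L: "C facet_of P \<Longrightarrow> \<alpha> C \<in> L"
    and mem_iff: "x \<in> P \<longleftrightarrow> x \<in> affine hull P \<and> (\<forall>C. C facet_of P \<longrightarrow> \<alpha> C \<bullet> x \<le> \<beta> C)"
    and facet_eq: "C facet_of P \<Longrightarrow> C = P \<inter> {x. \<alpha> C \<bullet> x = \<beta> C}"

lemma polytope_frame_exists:
  fixes P :: "'a::euclidean_space set"
  assumes "polytope P" and "P \<noteq> {}"
  obtains L \<alpha> \<beta> where "polytope_frame P L \<alpha> \<beta>" "aff_dim P = int (dim L)"
proof -
  obtain p where "p \<in> P"
    using \<open>P \<noteq> {}\<close> by blast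
  obtain L where L: "subspace L" "\<And>x y. x \<in> affine hull P \<Longrightarrow> x + y \<in> affine hull P \<longleftrightarrow> y \<in> L"
    and dim: "aff_dim P = int (dim L)"
    using affine_hull_translates_subspace[OF \<open>p \<in> P\<close>] by blast
  obtain \<alpha> \<beta> where \<alpha>: "\<And>C x. C facet_of P \<Longrightarrow> x \<in> affine hull P \<Longrightarrow> x + \<alpha> C \<in> affine hull P"
    and mem: "\<And>x. x \<in> P \<longleftrightarrow> x \<in> affine hull P \<and> (\<forall>C. C facet_of P \<longrightarrow> \<alpha> C \<bullet> x \<le> \<beta> C)"
    and facet: "\<And>C. C facet_of P \<Longrightarrow> C = P \<inter> {x. \<alpha> C \<bullet> x = \<beta> C}"
    using polytope_facet_inequalities[OF \<open>polytope P\<close>] by blast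
  have "polytope_frame P L \<alpha> \<beta>"
  proof
    show "\<alpha> C \<in> L" if "C facet_of P" for C
      using L(2)[OF hull_inc[OF \<open>p \<in> P\<close>]] \<alpha>[OF that hull_inc[OF \<open>p \<in> P\<close>]] by blast
  qed (use \<open>polytope P\<close> L mem facet in auto)
  with dim that show thesis
    by blast
qed

lemma face_of_Int_Inter_facets:
  assumes "convex P" and "S \<subseteq> {C. C facet_of P}"
  shows "(P \<inter> \<Inter>S) face_of P"
proof -
  have "\<Inter>(insert P S) face_of P"
    using assms by (intro face_of_Inter) (auto intro: face_of_refl facet_of_imp_face_of)
  then show ?thesis
    by simp
qed

lemma face_of_polytope_extreme_point:
  fixes P :: "'a::euclidean_space set"
  assumes "polytope P" and "F face_of P" and "F \<noteq> {}"
  obtains v where "v extreme_point_of P" "v \<in> F"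
proof -
  have "compact F" "convex F"
    using assms face_of_imp_compact face_of_imp_convex polytope_imp_compact polytope_imp_convex
    by blast+
  then obtain v where "v extreme_point_of F"
    using extreme_point_exists_convex \<open>F \<noteq> {}\<close> by blast
  then show thesis
    using extreme_point_of_face[OF \<open>F face_of P\<close>] that by blast
qed

lemma polytope_Inter_facets_empty:
  fixes P :: "'a::euclidean_space set"
  assumes "polytope P" and "aff_dim P \<ge> 1"
  shows "P \<inter> \<Inter>{C. C facet_of P} = {}"
proof (rule ccontr)
  assume "P \<inter> \<Inter>{C. C facet_of P} \<noteq> {}"
  then obtain v where v: "v extreme_point_of P" "v \<in> \<Inter>{C. C facet_of P}"
    using face_of_polytope_extreme_point[OF \<open>polytope P\<close> face_of_Int_Inter_facets]
      polytope_imp_convex[OF \<open>polytope P\<close>] by blast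
  have "w = v" if w: "w extreme_point_of P" for w
  proof (rule ccontr)
    assume "w \<noteq> v"
    then have "{w} \<noteq> P"
      using v(1) extreme_point_of_def by force
    then have w_eq: "{w} = \<Inter>{C. C facet_of P \<and> {w} \<subseteq> C}"
      using \<open>polytope P\<close> w by (intro face_of_polyhedron) (auto simp: face_of_singleton polytope_imp_polyhedron)
    have "v \<in> \<Inter>{C. C facet_of P \<and> {w} \<subseteq> C}"
      using v(2) by blast
    then have "v \<in> {w}"
      by (subst w_eq)
    with \<open>w \<noteq> v\<close> show False
      by simp
  qed
  then have "{x. x extreme_point_of P} \<subseteq> {v}"
    by blast
  then have "P \<subseteq> convex hull {v}"
    using Krein_Milman_Minkowski[of P] \<open>polytope P\<close> polytope_imp_compact polytope_imp_convex hull_mono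
    by metis
  then have "aff_dim P \<le> 0"
    using aff_dim_subset[of P "{v}"] by simp
  with \<open>aff_dim P \<ge> 1\<close> show False
    by simp
qed

lemma in_span_imageE:
  assumes "finite T" and "y \<in> span (f ` T)"
  obtains u where "y = (\<Sum>t\<in>T. u t *\<^sub>R f t)"
proof -
  have "span (f ` T) \<subseteq> range (\<lambda>u. \<Sum>t\<in>T. u t *\<^sub>R f t)"
  proof (rule span_minimal)
    show "f ` T \<subseteq> range (\<lambda>u. \<Sum>t\<in>T. u t *\<^sub>R f t)"
    proof (rule image_subsetI)
      fix t assume "t \<in> T"
      have "(\<Sum>t'\<in>T. (if t' = t then 1 else 0) *\<^sub>R f t') = (\<Sum>t'\<in>T. if t' = t then f t' else 0)"
        by (rule sum.cong) auto
      then have "f t = (\<Sum>t'\<in>T. (if t' = t then 1 else 0) *\<^sub>R f t')"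
        using \<open>finite T\<close> \<open>t \<in> T\<close> by (simp add: sum.delta)
      then show "f t \<in> range (\<lambda>u. \<Sum>t\<in>T. u t *\<^sub>R f t)"
        unfolding image_iff by (intro bexI[of _ "\<lambda>t'. if t' = t then 1 else 0"]) simp_all
    qed
    show "subspace (range (\<lambda>u. \<Sum>t\<in>T. u t *\<^sub>R f t))"
      unfolding subspace_def
    proof (intro conjI ballI allI)
      show "0 \<in> range (\<lambda>u. \<Sum>t\<in>T. u t *\<^sub>R f t)"
        unfolding image_iff by (intro bexI[of _ "\<lambda>_. 0"]) simp_all
      fix x y c
      assume "x \<in> range (\<lambda>u. \<Sum>t\<in>T. u t *\<^sub>R f t)" "y \<in> range (\<lambda>u. \<Sum>t\<in>T. u t *\<^sub>R f t)"
      then obtain u1 u2 where x: "x = (\<Sum>t\<in>T. u1 t *\<^sub>R f t)" and y: "y = (\<Sum>t\<in>T. u2 t *\<^sub>R f t)"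
        by blast
      show "x + y \<in> range (\<lambda>u. \<Sum>t\<in>T. u t *\<^sub>R f t)"
        unfolding image_iff
        by (intro bexI[of _ "\<lambda>t. u1 t + u2 t"]) (simp_all add: x y sum.distrib scaleR_add_left)
      show "c *\<^sub>R x \<in> range (\<lambda>u. \<Sum>t\<in>T. u t *\<^sub>R f t)"
        unfolding image_iff by (intro bexI[of _ "\<lambda>t. c * u1 t"]) (simp_all add: x scaleR_sum_right)
    qed
  qed
  with assms that show thesis
    by blast
qed

context polytope_frame
begin

definition active_facets :: "'a \<Rightarrow> 'a set set" where
  "active_facets v = {C. C facet_of P \<and> v \<in> C}"

definition slack :: "'a set \<Rightarrow> 'a \<Rightarrow> real" where
  "slack C x = \<beta> C - \<alpha> C \<bullet> x"

lemma finite_active_facets: "finite (active_facets v)"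
  using finite_polytope_facets[OF polytope] unfolding active_facets_def by simp

lemma slack_nonneg: "x \<in> P \<Longrightarrow> C facet_of P \<Longrightarrow> 0 \<le> slack C x"
  using mem_iff by (simp add: slack_def)

lemma mem_facet_iff_slack_eq_0:
  assumes "C facet_of P" and "x \<in> P"
  shows "x \<in> C \<longleftrightarrow> slack C x = 0"
  using arg_cong[OF facet_eq[OF assms(1)], of "(\<in>) x"] assms(2) by (auto simp: slack_def)

lemma slack_convex_combination:
  assumes "sum \<mu> S = 1"
  shows "slack C (\<Sum>s\<in>S. \<mu> s *\<^sub>R y s) = (\<Sum>s\<in>S. \<mu> s * slack C (y s))"
proof -
  have "(\<Sum>s\<in>S. \<mu> s * slack C (y s)) = \<beta> C * sum \<mu> S - (\<Sum>s\<in>S. \<mu> s * (\<alpha> C \<bullet> y s))"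
    by (simp add: slack_def right_diff_distrib sum_subtractf sum_distrib_left mult.commute)
  then show ?thesis
    using assms by (simp add: slack_def inner_sum_right)
qed

lemma diff_mem_L: "x \<in> affine hull P \<Longrightarrow> z \<in> affine hull P \<Longrightarrow> x - z \<in> L"
  using affine_hull_add_iff[of z "x - z"] by simp

lemma exists_orthogonal_in_L:
  assumes "X \<subseteq> L" and "span X \<noteq> L"
  obtains y where "y \<in> L" "y \<noteq> 0" "\<And>x. x \<in> X \<Longrightarrow> x \<bullet> y = 0"
proof -
  have span_L: "span L = L"
    by (rule span_eq_iff[THEN iffD2, OF subspace])
  have "span X \<subset> span L"
    unfolding span_L using assms span_minimal[OF \<open>X \<subseteq> L\<close> subspace] by blast
  then obtain y where "y \<noteq> 0" "y \<in> span L" and orth: "\<And>z. z \<in> span X \<Longrightarrow> orthogonal y z"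
    using orthogonal_to_subspace_exists_gen by blast
  show thesis
  proof (rule that)
    show "y \<in> L" "y \<noteq> 0"
      using \<open>y \<in> span L\<close> \<open>y \<noteq> 0\<close> span_L by simp_all
    show "x \<bullet> y = 0" if "x \<in> X" for x
      using orth[OF span_base[OF that]] by (simp add: orthogonal_def inner_commute)
  qed
qed

lemma eq_if_inner_eq_on_spanning:
  assumes "span X = L" and "x \<in> affine hull P" "z \<in> affine hull P"
    and "\<And>w. w \<in> X \<Longrightarrow> w \<bullet> x = w \<bullet> z"
  shows "x = z"
proof -
  have "orthogonal (x - z) w" if "w \<in> X" for w
  proof -
    have "(x - z) \<bullet> w = w \<bullet> x - w \<bullet> z"
      by (simp add: inner_commute[of "x - z"] inner_diff_right)
    then show ?thesis
      using assms(4)[OF that] by (simp add: orthogonal_def)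
  qed
  moreover have "x - z \<in> span X"
    using diff_mem_L[OF assms(2,3)] assms(1) by simp
  ultimately have "orthogonal (x - z) (x - z)"
    by (rule orthogonal_to_span[rotated])
  then show ?thesis
    unfolding orthogonal_self by simp
qed

lemma eventually_add_scaleR_mem:
  assumes "x \<in> P" "y \<in> L" and inward: "\<And>C. C facet_of P \<Longrightarrow> x \<in> C \<Longrightarrow> \<alpha> C \<bullet> y \<le> 0"
  shows "\<forall>\<^sub>F t in at_right 0. x + t *\<^sub>R y \<in> P"
proof -
  have each: "\<forall>\<^sub>F t in at_right 0. \<alpha> C \<bullet> (x + t *\<^sub>R y) \<le> \<beta> C" if C: "C facet_of P" for C
  proof (cases "x \<in> C")
    case True
    then have "\<alpha> C \<bullet> x = \<beta> C"
      using facet_eq[OF C] by blast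
    then have "\<alpha> C \<bullet> (x + t *\<^sub>R y) \<le> \<beta> C" if "0 < t" for t
      using inward[OF C True] that by (simp add: inner_add_right mult_nonneg_nonpos)
    then show ?thesis
      using eventually_at_right_less[of "0::real"] by (auto elim: eventually_mono)
  next
    case False
    have "\<alpha> C \<bullet> x \<le> \<beta> C"
      using mem_iff C \<open>x \<in> P\<close> by blast
    moreover have "\<alpha> C \<bullet> x \<noteq> \<beta> C"
      using facet_eq[OF C] False \<open>x \<in> P\<close> by blast
    ultimately have "\<alpha> C \<bullet> x < \<beta> C"
      by simp
    moreover have "((\<lambda>t. \<alpha> C \<bullet> (x + t *\<^sub>R y)) \<longlongrightarrow> \<alpha> C \<bullet> (x + 0 *\<^sub>R y)) (at_right 0)"
      by (intro tendsto_intros)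
    ultimately have "\<forall>\<^sub>F t in at_right 0. \<alpha> C \<bullet> (x + t *\<^sub>R y) < \<beta> C"
      by (simp add: order_tendstoD(2))
    then show ?thesis
      by (rule eventually_mono) simp
  qed
  have "\<forall>\<^sub>F t in at_right 0. \<forall>C\<in>{C. C facet_of P}. \<alpha> C \<bullet> (x + t *\<^sub>R y) \<le> \<beta> C"
    using each by (intro eventually_ball_finite finite_polytope_facets[OF polytope]) blast
  moreover have "x + t *\<^sub>R y \<in> affine hull P" for t
    using affine_hull_add_iff[OF hull_inc[OF \<open>x \<in> P\<close>]] \<open>y \<in> L\<close> subspace_scale[OF subspace] by blast
  ultimately show ?thesis
    using mem_iff by (auto elim: eventually_mono)
qed

lemma exists_step_into_polytope:
  assumes "x \<in> P" "y \<in> L" and "\<And>C. C facet_of P \<Longrightarrow> x \<in> C \<Longrightarrow> \<alpha> C \<bullet> y \<le> 0"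
  obtains t where "0 < t" "x + t *\<^sub>R y \<in> P"
proof -
  have "\<forall>\<^sub>F t in at_right 0. x + t *\<^sub>R y \<in> P \<and> 0 < t"
    using eventually_add_scaleR_mem[OF assms] eventually_at_right_less[of "0::real"]
    by (auto intro: eventually_conj)
  then obtain t where "x + t *\<^sub>R y \<in> P \<and> 0 < t"
    using eventually_happens'[OF trivial_limit_at_right_real] by blast
  with that show thesis
    by blast
qed

lemma span_active_facet_normals:
  assumes "v extreme_point_of P"
  shows "span (\<alpha> ` active_facets v) = L"
proof (rule ccontr)
  assume ne: "span (\<alpha> ` active_facets v) \<noteq> L"
  have "\<alpha> ` active_facets v \<subseteq> L"
    using normal_in_L by (auto simp: active_facets_def)
  then obtain y where "y \<in> L" "y \<noteq> 0" "\<And>x. x \<in> \<alpha> ` active_facets v \<Longrightarrow> x \<bullet> y = 0"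
    using exists_orthogonal_in_L ne by blast
  then have y: "y \<in> L" "y \<noteq> 0" "\<And>C. C \<in> active_facets v \<Longrightarrow> \<alpha> C \<bullet> y = 0"
    by auto
  have "v \<in> P"
    using assms extreme_point_of_def by blast
  have "\<forall>\<^sub>F t in at_right 0. v + t *\<^sub>R y \<in> P"
    using y by (intro eventually_add_scaleR_mem[OF \<open>v \<in> P\<close>]) (auto simp: active_facets_def)
  moreover have "\<forall>\<^sub>F t in at_right 0. v + t *\<^sub>R (- y) \<in> P"
    using y subspace_neg[OF subspace]
    by (intro eventually_add_scaleR_mem[OF \<open>v \<in> P\<close>]) (auto simp: active_facets_def)
  ultimately have "\<forall>\<^sub>F t in at_right 0. v + t *\<^sub>R y \<in> P \<and> v - t *\<^sub>R y \<in> P \<and> 0 < t"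
    using eventually_at_right_less[of "0::real"] by eventually_elim simp
  then obtain t where t: "v + t *\<^sub>R y \<in> P" "v - t *\<^sub>R y \<in> P" "0 < t"
    using eventually_happens'[OF trivial_limit_at_right_real] by blast
  have "v = midpoint (v + t *\<^sub>R y) (v - t *\<^sub>R y)"
    by (simp add: midpoint_def algebra_simps flip: scaleR_add_left)
  moreover have "v + t *\<^sub>R y \<noteq> v - t *\<^sub>R y"
    using y(2) t(3) by (simp add: algebra_simps flip: scaleR_2)
  ultimately have "v \<in> open_segment (v + t *\<^sub>R y) (v - t *\<^sub>R y)"
    by (metis midpoint_in_open_segment)
  with assms t show False
    by (auto simp: extreme_point_of_def)
qed

text \<open>The normals of \<open>S\<close> satisfy a linear dependency, so some combination of the slacks is
  constant; evaluating it at the points \<open>v s\<close> shows that, after normalisation, the slacks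
  are barycentric coordinates.\<close>
lemma sum_normalized_slacks:
  assumes "finite S" and "s0 \<in> S" and span: "span (\<alpha> ` (S - {s0})) = L"
    and S: "S \<subseteq> {C. C facet_of P}"
    and tight: "\<And>s t. s \<in> S \<Longrightarrow> t \<in> S \<Longrightarrow> t \<noteq> s \<Longrightarrow> slack t (v s) = 0"
    and loose: "\<And>s. s \<in> S \<Longrightarrow> 0 < slack s (v s)"
  shows "(\<Sum>s\<in>S. slack s x / slack s (v s)) = 1"
proof -
  have "\<alpha> s0 \<in> span (\<alpha> ` (S - {s0}))"
    using span S \<open>s0 \<in> S\<close> normal_in_L by blast
  then obtain u where u: "\<alpha> s0 = (\<Sum>t\<in>S - {s0}. u t *\<^sub>R \<alpha> t)"
    using in_span_imageE \<open>finite S\<close> by blast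
  define \<gamma> where "\<gamma> s = (if s = s0 then - 1 else u s)" for s
  have "(\<Sum>s\<in>S. \<gamma> s *\<^sub>R \<alpha> s) = \<gamma> s0 *\<^sub>R \<alpha> s0 + (\<Sum>s\<in>S - {s0}. \<gamma> s *\<^sub>R \<alpha> s)"
    by (rule sum.remove[OF \<open>finite S\<close> \<open>s0 \<in> S\<close>])
  also have "(\<Sum>s\<in>S - {s0}. \<gamma> s *\<^sub>R \<alpha> s) = (\<Sum>t\<in>S - {s0}. u t *\<^sub>R \<alpha> t)"
    by (rule sum.cong) (auto simp: \<gamma>_def)
  finally have dependency: "(\<Sum>s\<in>S. \<gamma> s *\<^sub>R \<alpha> s) = 0"
    using u by (simp add: \<gamma>_def)
  define c where "c = (\<Sum>s\<in>S. \<gamma> s * \<beta> s)"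
  have const_sum: "(\<Sum>s\<in>S. \<gamma> s * slack s y) = c" for y
  proof -
    have "(\<Sum>s\<in>S. \<gamma> s * (\<alpha> s \<bullet> y)) = (\<Sum>s\<in>S. \<gamma> s *\<^sub>R \<alpha> s) \<bullet> y"
      by (simp add: inner_sum_left)
    then show ?thesis
      using dependency by (simp add: slack_def c_def right_diff_distrib sum_subtractf)
  qed
  have at_vertex: "\<gamma> t * slack t (v t) = c" if "t \<in> S" for t
  proof -
    have "c = \<gamma> t * slack t (v t) + (\<Sum>s\<in>S - {t}. \<gamma> s * slack s (v t))"
      using const_sum[of "v t"] sum.remove[OF \<open>finite S\<close> that, of "\<lambda>s. \<gamma> s * slack s (v t)"] by simp
    also have "(\<Sum>s\<in>S - {t}. \<gamma> s * slack s (v t)) = 0"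
      using tight that by (intro sum.neutral) auto
    finally show ?thesis
      by simp
  qed
  have "c \<noteq> 0"
    using at_vertex[OF \<open>s0 \<in> S\<close>] loose[OF \<open>s0 \<in> S\<close>] by (simp add: \<gamma>_def)
  then have "slack s x / slack s (v s) = \<gamma> s * slack s x / c" if "s \<in> S" for s
    using at_vertex[OF that, symmetric] loose[OF that] by (auto simp: field_simps)
  then have "(\<Sum>s\<in>S. slack s x / slack s (v s)) = (\<Sum>s\<in>S. \<gamma> s * slack s x) / c"
    by (simp add: sum_divide_distrib)
  with \<open>c \<noteq> 0\<close> show ?thesis
    by (simp add: const_sum)
qed

lemma subset_convex_hull_opposite_vertices:
  assumes "finite S" and "s0 \<in> S" and span: "span (\<alpha> ` (S - {s0})) = L"
    and S: "S \<subseteq> {C. C facet_of P}"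
    and tight: "\<And>s t. s \<in> S \<Longrightarrow> t \<in> S \<Longrightarrow> t \<noteq> s \<Longrightarrow> slack t (v s) = 0"
    and loose: "\<And>s. s \<in> S \<Longrightarrow> 0 < slack s (v s)"
    and v: "\<And>s. s \<in> S \<Longrightarrow> v s \<in> P"
  shows "P \<subseteq> convex hull (v ` S)"
proof
  fix x assume "x \<in> P"
  define \<mu> where "\<mu> s = slack s x / slack s (v s)" for s
  have \<mu>_nonneg: "0 \<le> \<mu> s" if "s \<in> S" for s
    using slack_nonneg[OF \<open>x \<in> P\<close>] loose[OF that] S that by (auto simp: \<mu>_def)
  have \<mu>_sum: "sum \<mu> S = 1"
    unfolding \<mu>_def by (rule sum_normalized_slacks[OF assms(1-6)])
  define z where "z = (\<Sum>s\<in>S. \<mu> s *\<^sub>R v s)"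
  have z_hull: "z \<in> convex hull (v ` S)"
    unfolding z_def using \<open>finite S\<close> \<mu>_nonneg \<mu>_sum
    by (intro convex_sum convex_convex_hull) (auto intro: hull_inc)
  have "convex hull (v ` S) \<subseteq> P"
    using v polytope_imp_convex[OF polytope] by (intro hull_minimal) auto
  with z_hull have "z \<in> P"
    by blast
  have "slack t z = slack t x" if "t \<in> S" for t
  proof -
    have "slack t z = (\<Sum>s\<in>S. \<mu> s * slack t (v s))"
      unfolding z_def by (rule slack_convex_combination[OF \<mu>_sum])
    also have "\<dots> = \<mu> t * slack t (v t) + (\<Sum>s\<in>S - {t}. \<mu> s * slack t (v s))"
      using sum.remove[OF \<open>finite S\<close> that] by simp
    also have "(\<Sum>s\<in>S - {t}. \<mu> s * slack t (v s)) = 0"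
      using tight that by (intro sum.neutral) auto
    also have "\<mu> t * slack t (v t) + 0 = slack t x"
      using loose[OF that] by (simp add: \<mu>_def)
    finally show ?thesis .
  qed
  then have "w \<bullet> x = w \<bullet> z" if "w \<in> \<alpha> ` (S - {s0})" for w
    using that by (auto simp: slack_def)
  then have "x = z"
    using \<open>x \<in> P\<close> \<open>z \<in> P\<close> by (intro eq_if_inner_eq_on_spanning[OF span]) (auto intro: hull_inc)
  with z_hull show "x \<in> convex hull (v ` S)"
    by simp
qed

end

section \<open>Simple polytopes\<close>

lemma independent_facets_Inter_empty_iff:
  assumes "P \<inter> \<Inter>S = {}"
  shows "independent_facets P S \<longleftrightarrow> S \<subseteq> facets P \<and> (\<forall>s\<in>S. P \<inter> \<Inter>(S - {s}) \<noteq> {})"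
  using assms by (auto simp: independent_facets_def)

lemma exists_independent_facets_Inter_empty:
  assumes "finite S" and "S \<subseteq> facets P" and "P \<inter> \<Inter>S = {}"
  obtains S' where "S' \<subseteq> S" "independent_facets P S'" "P \<inter> \<Inter>S' = {}"
proof -
  have "\<exists>S'. (S' \<subseteq> S \<and> P \<inter> \<Inter>S' = {}) \<and>
      (\<forall>T. T \<subseteq> S \<and> P \<inter> \<Inter>T = {} \<longrightarrow> card S' \<le> card T)"
    by (rule ex_has_least_nat[where k = S]) (use assms(3) in simp)
  then obtain S' where S': "S' \<subseteq> S" "P \<inter> \<Inter>S' = {}"
    and least: "\<forall>T. T \<subseteq> S \<and> P \<inter> \<Inter>T = {} \<longrightarrow> card S' \<le> card T"
    by (elim exE conjE) (rule that)
  have "finite S'"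
    by (rule finite_subset[OF S'(1) \<open>finite S\<close>])
  have "P \<inter> \<Inter>(S' - {s}) \<noteq> {}" if "s \<in> S'" for s
  proof
    assume "P \<inter> \<Inter>(S' - {s}) = {}"
    then have "card S' \<le> card (S' - {s})"
      using least S'(1) by blast
    with card_Diff1_less[OF \<open>finite S'\<close> that] show False
      by linarith
  qed
  then have "independent_facets P S'"
    using S' assms(2) by (simp add: independent_facets_Inter_empty_iff)
  with S' that show thesis
    by blast
qed

lemma two_le_card_independent_facets_Inter_empty:
  assumes "polytope P" "P \<noteq> {}" "independent_facets P S" "P \<inter> \<Inter>S = {}"
  shows "2 \<le> card S"
proof -
  have "finite S"
    using assms(3) finite_polytope_facets[OF assms(1)]
    by (auto simp: independent_facets_def facets_def intro: finite_subset)
  have "S \<noteq> {}"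
    using assms(2,4) by auto
  then have "card S \<noteq> 0"
    using \<open>finite S\<close> by simp
  moreover have not_singleton: "S \<noteq> {C}" for C
  proof
    assume "S = {C}"
    then have "C facet_of P"
      using assms(3) by (simp add: independent_facets_def facets_def)
    then have "C \<noteq> {}" "C \<subseteq> P"
      by (auto simp: facet_of_def face_of_imp_subset)
    with \<open>S = {C}\<close> assms(4) show False
      by auto
  qed
  moreover have "card S \<noteq> 1"
  proof
    assume "card S = 1"
    then obtain C where "S = {C}"
      by (rule card_1_singletonE)
    with not_singleton show False
      by blast
  qed
  ultimately show ?thesis
    by linarith
qed

locale simple_polytope_frame = polytope_frame +
  assumes simple: "v extreme_point_of P \<Longrightarrow> card {C. C facet_of P \<and> v \<in> C} = dim L"
begin

lemma card_active_facets: "v extreme_point_of P \<Longrightarrow> card (active_facets v) = dim L"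
  using simple by (simp add: active_facets_def)

lemma span_active_facet_normals_Diff_ne:
  assumes v: "v extreme_point_of P" and g: "g \<in> active_facets v"
  shows "span (\<alpha> ` (active_facets v - {g})) \<noteq> L"
proof
  assume "span (\<alpha> ` (active_facets v - {g})) = L"
  then have "dim L \<le> card (\<alpha> ` (active_facets v - {g}))"
    using dim_le_card[of L "\<alpha> ` (active_facets v - {g})"] finite_active_facets by simp
  also have "\<dots> \<le> card (active_facets v - {g})"
    using finite_active_facets by (intro card_image_le) simp
  also have "\<dots> < card (active_facets v)"
    using finite_active_facets g by (rule card_Diff1_less)
  finally show False
    using card_active_facets[OF v] by simp
qed

lemma exists_leaving_direction:
  assumes v: "v extreme_point_of P" and g: "g \<in> active_facets v"
  obtains y where "y \<in> L" "\<And>C. C \<in> active_facets v - {g} \<Longrightarrow> \<alpha> C \<bullet> y = 0" "\<alpha> g \<bullet> y < 0"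
proof -
  have "\<alpha> ` active_facets v \<subseteq> L"
    using normal_in_L by (auto simp: active_facets_def)
  then have X: "\<alpha> ` (active_facets v - {g}) \<subseteq> L"
    by blast
  have "span (\<alpha> ` (active_facets v - {g})) \<noteq> L"
    by (rule span_active_facet_normals_Diff_ne[OF v g])
  then obtain y where y: "y \<in> L" "y \<noteq> 0"
    and orth_image: "\<And>x. x \<in> \<alpha> ` (active_facets v - {g}) \<Longrightarrow> x \<bullet> y = 0"
    using exists_orthogonal_in_L[OF X] by blast
  have orth: "\<alpha> C \<bullet> y = 0" if "C \<in> active_facets v - {g}" for C
    using orth_image[OF imageI[OF that]] .
  have "\<alpha> g \<bullet> y \<noteq> 0"
  proof
    assume "\<alpha> g \<bullet> y = 0"
    then have "\<alpha> C \<bullet> y = 0" if "C \<in> active_facets v" for C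
      using orth that by (cases "C = g") auto
    then have "orthogonal y w" if "w \<in> \<alpha> ` active_facets v" for w
      using that by (auto simp: orthogonal_def inner_commute)
    moreover have "y \<in> span (\<alpha> ` active_facets v)"
      using y(1) span_active_facet_normals[OF v] by simp
    ultimately have "orthogonal y y"
      by (rule orthogonal_to_span[rotated])
    with y(2) show False
      by (simp add: orthogonal_self)
  qed
  show thesis
  proof (cases "\<alpha> g \<bullet> y < 0")
    case True
    with y(1) orth show thesis
      by (rule that)
  next
    case False
    with \<open>\<alpha> g \<bullet> y \<noteq> 0\<close> have "\<alpha> g \<bullet> - y < 0"
      by simp
    moreover have "\<alpha> C \<bullet> - y = 0" if "C \<in> active_facets v - {g}" for C
      using orth[OF that] by simp
    ultimately show thesis
      using subspace_neg[OF subspace y(1)] that by blast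
  qed
qed

text \<open>Moving off a vertex of the face in a direction that leaves only the facet \<open>b\<close> keeps the
  point in all other facets through that vertex.\<close>
lemma facet_mem_if_Inter_subset:
  assumes S: "S \<subseteq> {C. C facet_of P}" and ne: "P \<inter> \<Inter>S \<noteq> {}"
    and b: "b facet_of P" and sub: "P \<inter> \<Inter>S \<subseteq> b"
  shows "b \<in> S"
proof (rule ccontr)
  assume "b \<notin> S"
  obtain v where v: "v extreme_point_of P" "v \<in> P \<inter> \<Inter>S"
    using face_of_polytope_extreme_point[OF polytope face_of_Int_Inter_facets ne]
      polytope_imp_convex[OF polytope] S by blast
  have "v \<in> P"
    using v(2) by blast
  have b_active: "b \<in> active_facets v"
    using v(2) sub b by (auto simp: active_facets_def)
  obtain y where y: "y \<in> L" "\<And>C. C \<in> active_facets v - {b} \<Longrightarrow> \<alpha> C \<bullet> y = 0" "\<alpha> b \<bullet> y < 0"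
    using exists_leaving_direction[OF v(1) b_active] by blast
  have "\<alpha> C \<bullet> y \<le> 0" if "C facet_of P" "v \<in> C" for C
    using y that by (cases "C = b") (auto simp: active_facets_def)
  then obtain t where t: "0 < t" "v + t *\<^sub>R y \<in> P"
    by (rule exists_step_into_polytope[OF \<open>v \<in> P\<close> y(1)])
  have "v + t *\<^sub>R y \<in> C" if "C \<in> S" for C
  proof -
    have C: "C facet_of P" "C \<in> active_facets v - {b}"
      using that S v(2) \<open>b \<notin> S\<close> by (auto simp: active_facets_def)
    then have "\<alpha> C \<bullet> v = \<beta> C"
      using facet_eq \<open>v \<in> P\<close> by (auto simp: active_facets_def)
    then have "\<alpha> C \<bullet> (v + t *\<^sub>R y) = \<beta> C"
      using y(2)[OF C(2)] by (simp add: inner_add_right)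
    then show ?thesis
      using facet_eq[OF C(1)] t(2) by blast
  qed
  then have "v + t *\<^sub>R y \<in> b"
    using sub t(2) by blast
  then have "\<alpha> b \<bullet> (v + t *\<^sub>R y) = \<beta> b"
    using facet_eq[OF b] by blast
  moreover have "\<alpha> b \<bullet> v = \<beta> b"
    using facet_eq[OF b] b_active by (auto simp: active_facets_def)
  ultimately have "t * (\<alpha> b \<bullet> y) = 0"
    by (simp add: inner_add_right)
  with t(1) y(3) show False
    by simp
qed

lemma card_le_dim_if_Inter_nonempty:
  assumes S: "S \<subseteq> {C. C facet_of P}" and ne: "P \<inter> \<Inter>S \<noteq> {}"
  shows "card S \<le> dim L"
proof -
  obtain v where v: "v extreme_point_of P" "v \<in> P \<inter> \<Inter>S"
    using face_of_polytope_extreme_point[OF polytope face_of_Int_Inter_facets ne]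
      polytope_imp_convex[OF polytope] S by blast
  then have "S \<subseteq> active_facets v"
    using S by (auto simp: active_facets_def)
  then have "card S \<le> card (active_facets v)"
    by (rule card_mono[OF finite_active_facets])
  with card_active_facets[OF v(1)] show ?thesis
    by simp
qed

lemma opposite_vertices:
  assumes indep: "independent_facets P S" and empty: "P \<inter> \<Inter>S = {}"
    and card: "card S = Suc (dim L)"
  obtains v where "\<And>s. s \<in> S \<Longrightarrow> v s extreme_point_of P" "\<And>s. s \<in> S \<Longrightarrow> v s \<in> P \<inter> \<Inter>(S - {s})"
    "\<And>s. s \<in> S \<Longrightarrow> active_facets (v s) = S - {s}"
proof -
  have S: "S \<subseteq> {C. C facet_of P}" and ne: "\<And>s. s \<in> S \<Longrightarrow> P \<inter> \<Inter>(S - {s}) \<noteq> {}"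
    using indep empty by (auto simp: independent_facets_Inter_empty_iff facets_def)
  have "finite S"
    using card by (simp add: card_ge_0_finite)
  have ex_vertex: "\<exists>v. v extreme_point_of P \<and> v \<in> P \<inter> \<Inter>(S - {s})" if "s \<in> S" for s
  proof -
    have "(P \<inter> \<Inter>(S - {s})) face_of P"
      using S polytope_imp_convex[OF polytope] by (intro face_of_Int_Inter_facets) auto
    then show ?thesis
      using face_of_polytope_extreme_point[OF polytope _ ne[OF that]] by blast
  qed
  define v where "v s = (SOME v. v extreme_point_of P \<and> v \<in> P \<inter> \<Inter>(S - {s}))" for s
  have v: "v s extreme_point_of P" "v s \<in> P \<inter> \<Inter>(S - {s})" if "s \<in> S" for s
    using someI_ex[OF ex_vertex[OF that]] by (simp_all add: v_def)
  moreover have "active_facets (v s) = S - {s}" if "s \<in> S" for s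
  proof (rule card_subset_eq[OF finite_active_facets, symmetric])
    show "S - {s} \<subseteq> active_facets (v s)"
      using v(2)[OF that] S by (auto simp: active_facets_def)
    show "card (S - {s}) = card (active_facets (v s))"
      using card card_active_facets[OF v(1)[OF that]] \<open>finite S\<close> that by simp
  qed
  ultimately show thesis
    by (rule that)
qed

text \<open>Such a set cuts out a simplex, spanned by the vertices opposite to its facets.\<close>
lemma facet_mem_if_independent_card_Suc_dim:
  assumes indep: "independent_facets P S" and empty: "P \<inter> \<Inter>S = {}"
    and card: "card S = Suc (dim L)" and C: "C facet_of P"
  shows "C \<in> S"
proof -
  have S: "S \<subseteq> {C. C facet_of P}"
    using indep by (auto simp: independent_facets_def facets_def)
  have "finite S"
    using card by (simp add: card_ge_0_finite)
  obtain v where v: "\<And>s. s \<in> S \<Longrightarrow> v s extreme_point_of P"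
    "\<And>s. s \<in> S \<Longrightarrow> v s \<in> P \<inter> \<Inter>(S - {s})"
    and active_v: "\<And>s. s \<in> S \<Longrightarrow> active_facets (v s) = S - {s}"
    using opposite_vertices[OF indep empty card] by blast
  have v_in_P: "v s \<in> P" if "s \<in> S" for s
    using v(2)[OF that] by blast
  have tight: "slack t (v s) = 0" if "s \<in> S" "t \<in> S" "t \<noteq> s" for s t
    using active_v[OF that(1)] that v_in_P mem_facet_iff_slack_eq_0
    by (auto simp: active_facets_def)
  have loose: "0 < slack s (v s)" if "s \<in> S" for s
  proof -
    have "v s \<notin> s"
      using v(2)[OF that] empty that by blast
    then have "slack s (v s) \<noteq> 0"
      using mem_facet_iff_slack_eq_0 S that v_in_P[OF that] by blast
    with slack_nonneg[OF v_in_P[OF that]] S that show ?thesis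
      by fastforce
  qed
  obtain s0 where "s0 \<in> S"
    using card by fastforce
  then have "span (\<alpha> ` (S - {s0})) = L"
    using span_active_facet_normals[OF v(1)] active_v by metis
  then have hull: "P \<subseteq> convex hull (v ` S)"
    using subset_convex_hull_opposite_vertices[OF \<open>finite S\<close> \<open>s0 \<in> S\<close> _ S tight loose v_in_P]
    by blast
  moreover have "convex hull (v ` S) \<subseteq> P"
    using v_in_P polytope_imp_convex[OF polytope] by (intro hull_minimal) auto
  ultimately have P_eq: "P = convex hull (v ` S)"
    by blast
  obtain e where "e extreme_point_of P" "e \<in> C"
    using face_of_polytope_extreme_point[OF polytope facet_of_imp_face_of[OF C]] C
    by (auto simp: facet_of_def)
  then obtain s where "s \<in> S" "e = v s"
    using extreme_point_of_convex_hull P_eq by (metis imageE)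
  then have "C \<in> active_facets (v s)"
    using C \<open>e \<in> C\<close> by (simp add: active_facets_def)
  with active_v[OF \<open>s \<in> S\<close>] show ?thesis
    by blast
qed

lemma card_independent_facets_Inter_empty_le:
  assumes "independent_facets P S" and "P \<inter> \<Inter>S = {}"
  shows "card S \<le> Suc (dim L)"
proof (cases "S = {}")
  case False
  then obtain s where "s \<in> S"
    by blast
  have S: "S \<subseteq> {C. C facet_of P}" and "P \<inter> \<Inter>(S - {s}) \<noteq> {}"
    using assms \<open>s \<in> S\<close> by (auto simp: independent_facets_Inter_empty_iff facets_def)
  then have "card (S - {s}) \<le> dim L"
    by (intro card_le_dim_if_Inter_nonempty) auto
  moreover have "finite S"
    using S finite_polytope_facets[OF polytope] finite_subset by blast
  ultimately show ?thesis
    using card_Suc_Diff1[OF _ \<open>s \<in> S\<close>] by fastforce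
qed simp

end

section \<open>The presentation\<close>

lemma face_prod_append: "face_prod P (u @ v) = face_prod P u \<inter> face_prod P v"
  by (auto simp: face_prod_def)

lemma faces_eq_face_prods:
  fixes P :: "'a::euclidean_space set"
  assumes "polytope P" and "aff_dim P \<ge> 1"
  shows "face_prod P ` lists (facets P) = face_monoid P"
proof
  show "face_prod P ` lists (facets P) \<subseteq> face_monoid P"
    using face_of_Int_Inter_facets[OF polytope_imp_convex[OF \<open>polytope P\<close>]]
    by (auto simp: face_prod_def face_monoid_def facets_def)
next
  have "F \<in> face_prod P ` lists (facets P)" if "F face_of P" for F
  proof -
    have finite_facets: "finite {C. C facet_of P \<and> F \<subseteq> C}"
      using finite_polytope_facets[OF \<open>polytope P\<close>] by simp
    consider "F = P" | "F = {}" | "F \<noteq> P" "F \<noteq> {}"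
      by blast
    then show ?thesis
    proof cases
      case 1
      then show ?thesis
        by (intro image_eqI[of _ _ "[]"]) (auto simp: face_prod_def)
    next
      case 2
      obtain w where "set w = {C. C facet_of P}"
        using finite_list[OF finite_polytope_facets[OF \<open>polytope P\<close>]] by blast
      with 2 show ?thesis
        using polytope_Inter_facets_empty[OF assms]
        by (intro image_eqI[of _ _ w]) (auto simp: face_prod_def facets_def)
    next
      case 3
      obtain w where w: "set w = {C. C facet_of P \<and> F \<subseteq> C}"
        using finite_list[OF finite_facets] by blast
      have "F = \<Inter>{C. C facet_of P \<and> F \<subseteq> C}"
        using 3 \<open>F face_of P\<close> polytope_imp_polyhedron[OF \<open>polytope P\<close>] by (intro face_of_polyhedron)
      moreover have "F \<subseteq> P"
        using \<open>F face_of P\<close> face_of_imp_subset by blast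
      ultimately have "F = face_prod P w"
        using w by (auto simp: face_prod_def)
      moreover have "w \<in> lists (facets P)"
        using w by (auto simp: facets_def)
      ultimately show ?thesis
        by blast
    qed
  qed
  then show "face_monoid P \<subseteq> face_prod P ` lists (facets P)"
    by (auto simp: face_monoid_def)
qed

lemma face_prod_eq_if_mon_cong_facet_relations:
  "mon_cong (facet_relations P) u v \<Longrightarrow> face_prod P u = face_prod P v"
proof (induction rule: mon_cong.induct)
  case (base u v)
  then show ?case
    unfolding facet_relations_def by (auto simp: face_prod_def)
next
  case (compat u v x y)
  then show ?case
    by (simp add: face_prod_append)
qed auto

lemma facet_relations_absorbI:
  assumes b: "b facet_of P" and indep: "independent_facets P S" and empty: "P \<inter> \<Inter>S = {}"
    and card: "2 \<le> card S" "int (card S) \<le> aff_dim P"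
  obtains as where "set as = S" "(as, as @ [b]) \<in> facet_relations P"
proof -
  have "finite S"
    using card(1) card.infinite by fastforce
  then obtain as where as: "set as = S" "distinct as"
    using finite_distinct_list by blast
  obtain s where "s \<in> S"
    using card(1) by fastforce
  then have "\<Inter>(set as) \<subseteq> P"
    using as(1) indep facet_of_imp_subset by (fastforce simp: independent_facets_def facets_def)
  then have "\<Inter>(set as) = {}"
    using empty as(1) by blast
  moreover have "length as = card S"
    using distinct_card[OF as(2)] as(1) by simp
  ultimately have "(as, as @ [b]) \<in> {(as, as @ [b]) | as b. b \<in> facets P \<and> distinct as \<and>
      set as \<subseteq> facets P \<and> independent_facets P (set as) \<and> 2 \<le> length as \<and>
      int (length as) \<le> aff_dim P \<and> \<Inter>(set as) = {}}"
    using as indep b card by (auto simp: independent_facets_def facets_def)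
  then have "(as, as @ [b]) \<in> facet_relations P"
    unfolding facet_relations_def by (rule UnI2)
  with as(1) that show thesis
    by blast
qed

context simple_polytope_frame
begin

lemma facet_absorbed_or_relation:
  assumes dim: "aff_dim P = int (dim L)" and u: "u \<in> lists (facets P)"
    and b: "b facet_of P" and sub: "face_prod P u \<subseteq> b"
  obtains "b \<in> set u" | as where "set as \<subseteq> set u" "(as, as @ [b]) \<in> facet_relations P"
proof (cases "P \<inter> \<Inter>(set u) = {}")
  case False
  moreover have "set u \<subseteq> {C. C facet_of P}"
    using u by (auto simp: facets_def)
  ultimately show thesis
    using facet_mem_if_Inter_subset[OF _ _ b] sub that(1) by (simp add: face_prod_def)
next
  case True
  moreover have "set u \<subseteq> facets P"
    using u by auto
  ultimately obtain S where S: "S \<subseteq> set u" "independent_facets P S" "P \<inter> \<Inter>S = {}"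
    using exists_independent_facets_Inter_empty[OF finite_set] by blast
  have "P \<noteq> {}"
    using dim by auto
  then have "2 \<le> card S"
    using two_le_card_independent_facets_Inter_empty[OF polytope _ S(2,3)] by blast
  show thesis
  proof (cases "card S = Suc (dim L)")
    case True
    then show thesis
      using facet_mem_if_independent_card_Suc_dim[OF S(2,3) _ b] S(1) that(1) by blast
  next
    case False
    then have "int (card S) \<le> aff_dim P"
      using card_independent_facets_Inter_empty_le[OF S(2,3)] dim by simp
    then obtain as where "set as = S" "(as, as @ [b]) \<in> facet_relations P"
      using facet_relations_absorbI[OF b S(2,3) \<open>2 \<le> card S\<close>] by blast
    with S(1) that(2) show thesis
      by blast
  qed
qed

lemma mon_cong_snoc_if_face_prod_subset:
  assumes "aff_dim P = int (dim L)" and u: "u \<in> lists (facets P)"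
    and b: "b facet_of P" and "face_prod P u \<subseteq> b"
  shows "mon_cong (facet_relations P) u (u @ [b])"
proof -
  interpret idempotent_commutative_relations "facet_relations P" "facets P"
    by (rule idempotent_commutative_facet_relations)
  from facet_absorbed_or_relation[OF assms] show ?thesis
  proof cases
    case 1
    then show ?thesis
      using u by (intro mon_cong_snoc_absorb) auto
  next
    case (2 as)
    have "mon_cong (facet_relations P) u (as @ u)"
      using u 2(1) by (intro mon_cong_if_set_eq) auto
    also have "mon_cong (facet_relations P) \<dots> ((as @ [b]) @ u)"
      using 2(2) by (intro mon_cong_append_right mon_cong.base)
    also have "mon_cong (facet_relations P) \<dots> (u @ [b])"
      using u 2(1) b by (intro mon_cong_if_set_eq) (auto simp: facets_def)
    finally show ?thesis .
  qed
qed

lemma mon_cong_append_if_face_prod_subset: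
  assumes dim: "aff_dim P = int (dim L)" and u: "u \<in> lists (facets P)" and v: "v \<in> lists (facets P)"
    and sub: "face_prod P u \<subseteq> face_prod P v"
  shows "mon_cong (facet_relations P) u (u @ v)"
  using v sub
proof (induction v rule: rev_induct)
  case Nil
  then show ?case
    by (simp add: mon_cong.refl)
next
  case (snoc b v)
  have "mon_cong (facet_relations P) u (u @ v)"
    using snoc by (auto simp: face_prod_def)
  also have "mon_cong (facet_relations P) \<dots> ((u @ v) @ [b])"
    using snoc.prems u
    by (intro mon_cong_snoc_if_face_prod_subset[OF dim]) (auto simp: face_prod_def facets_def)
  finally show ?case
    by simp
qed

lemma mon_cong_facet_relations_iff:
  assumes dim: "aff_dim P = int (dim L)" and u: "u \<in> lists (facets P)" and v: "v \<in> lists (facets P)"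
  shows "mon_cong (facet_relations P) u v \<longleftrightarrow> face_prod P u = face_prod P v"
proof
  show "mon_cong (facet_relations P) u v \<Longrightarrow> face_prod P u = face_prod P v"
    by (rule face_prod_eq_if_mon_cong_facet_relations)
next
  interpret idempotent_commutative_relations "facet_relations P" "facets P"
    by (rule idempotent_commutative_facet_relations)
  assume eq: "face_prod P u = face_prod P v"
  have "mon_cong (facet_relations P) u (u @ v)"
    using eq by (intro mon_cong_append_if_face_prod_subset[OF dim u v]) simp
  also have "mon_cong (facet_relations P) \<dots> (v @ u)"
    using u v by (intro mon_cong_append_commute) auto
  also have "mon_cong (facet_relations P) \<dots> v"
    by (rule mon_cong.sym, rule mon_cong_append_if_face_prod_subset[OF dim v u]) (simp add: eq)
  finally show "mon_cong (facet_relations P) u v" .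
qed

end

theorem proposition4:
  fixes P :: "'a::euclidean_space set"
  assumes "simple_polytope P" and "aff_dim P \<ge> 1"
  shows "has_presentation (face_monoid P) (\<inter>) P (facets P) id (facet_relations P)"
proof -
  have "polytope P"
    and simple: "\<And>v. v extreme_point_of P \<Longrightarrow> int (card {C. C facet_of P \<and> v \<in> C}) = aff_dim P"
    using assms(1) by (auto simp: simple_polytope_def)
  have "P \<noteq> {}"
    using assms(2) by auto
  then obtain L \<alpha> \<beta> where frame: "polytope_frame P L \<alpha> \<beta>" and dim: "aff_dim P = int (dim L)"
    using polytope_frame_exists[OF \<open>polytope P\<close>] by blast
  interpret simple_polytope_frame P L \<alpha> \<beta>
    using frame simple dim by (simp add: simple_polytope_frame_def simple_polytope_frame_axioms_def)
  have eval: "foldr (\<lambda>a x. id a \<inter> x) w P = face_prod P w" for w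
    by (induction w) (auto simp: face_prod_def)
  show ?thesis
    unfolding has_presentation_def Let_def eval
    using faces_eq_face_prods[OF \<open>polytope P\<close> assms(2)] mon_cong_facet_relations_iff[OF dim]
    by simp
qed


end
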